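(* For every $\beta>0$ there is $\gamma=\gamma(\beta)>0$ and $n_0$ such that the following holds for all $n\ge n_0$. Let $G$ be an $n$-vertex graph such that for every partition $V(G)=X\cup Y$ with $|X|=\lfloor n/2\rfloor$ it holds that $\left|e(X,Y)-\frac12|X||Y|\right|\le\gamma n^2$. Then $G$ is host-$\beta$-good.
   Context: $e(X,Y)$ is the number of edges of $G$ between $X$ and $Y$. For a vertex $x$ and set $S$, $N_S(x)$ is the set of neighbors of $x$ in $S$ and $d_S(x)=|N_S(x)|$. An $n$-vertex graph $G$ is host-$\beta$-good if there is a partition $V(G)=X\cup Y$ with $|X|=\lfloor n/2\rfloor$ and distinct vertices $x_1,x_1',\dots,x_m,x_m'\in X$ with $m=0.05n$, such that for every $1\le i\le m$: (1) $|d_Y(x_i)-d_Y(x_i')|\le\beta n$; (2) $0.02|Y|\le|N_Y(x_i)\triangle N_Y(x_i')|\le0.98|Y|$; (3) $0.1|Y|\le d_Y(x_i),d_Y(x_i')\le0.9|Y|$. *)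

theory Defs
  imports Complex_Main
begin

definition is_graph :: "'a set \<Rightarrow> ('a \<Rightarrow> 'a \<Rightarrow> bool) \<Rightarrow> bool" where
  "is_graph V E \<longleftrightarrow> finite V \<and> (\<forall>x y. E x y \<longrightarrow> x \<in> V \<and> y \<in> V) \<and>
     (\<forall>x y. E x y \<longrightarrow> E y x) \<and> (\<forall>x. \<not> E x x)"

definition e_between :: "('a \<Rightarrow> 'a \<Rightarrow> bool) \<Rightarrow> 'a set \<Rightarrow> 'a set \<Rightarrow> nat" where
  "e_between E X Y = card {(x, y). x \<in> X \<and> y \<in> Y \<and> E x y}"

definition nbhd :: "('a \<Rightarrow> 'a \<Rightarrow> bool) \<Rightarrow> 'a set \<Rightarrow> 'a \<Rightarrow> 'a set" where
  "nbhd E S x = {y \<in> S. E x y}"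

definition deg :: "('a \<Rightarrow> 'a \<Rightarrow> bool) \<Rightarrow> 'a set \<Rightarrow> 'a \<Rightarrow> nat" where
  "deg E S x = card (nbhd E S x)"

text \<open>host-beta-good. m = 0.05 n is read as ceiling(n/20).\<close>
definition host_good :: "real \<Rightarrow> 'a set \<Rightarrow> ('a \<Rightarrow> 'a \<Rightarrow> bool) \<Rightarrow> bool" where
  "host_good \<beta> V E \<longleftrightarrow> (let n = card V; m = nat \<lceil>real n / 20\<rceil> in
     \<exists>X Y xs xs'. X \<union> Y = V \<and> X \<inter> Y = {} \<and> card X = n div 2 \<and>
       (\<forall>i<m. xs i \<in> X \<and> xs' i \<in> X) \<and>
       inj_on (\<lambda>p. if fst p then xs (snd p) else xs' (snd p)) (UNIV \<times> {..<m}) \<and>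
       (\<forall>i<m.
          \<bar>real (deg E Y (xs i)) - real (deg E Y (xs' i))\<bar> \<le> \<beta> * real n \<and>
          0.02 * card Y \<le> real (card (sym_diff (nbhd E Y (xs i)) (nbhd E Y (xs' i)))) \<and>
          real (card (sym_diff (nbhd E Y (xs i)) (nbhd E Y (xs' i)))) \<le> 0.98 * card Y \<and>
          0.1 * card Y \<le> real (deg E Y (xs i)) \<and> real (deg E Y (xs i)) \<le> 0.9 * card Y \<and>
          0.1 * card Y \<le> real (deg E Y (xs' i)) \<and> real (deg E Y (xs' i)) \<le> 0.9 * card Y))"

end

theory Submission
  imports Defs
begin

(* Fix a half X of V and put Y = V - X.  Applying the cut condition to the four halves obtained
   by exchanging two pairs of equal-sized pieces gives the switching bound
   |e(U1,U2) + e(W1,W2) - e(U1,W2) - e(W1,U2)| <= 2 gamma n^2.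
   It shows that X cannot contain two blocks of high and two blocks of low Y-degree of size about
   kappa n, and that fewer than k vertices of X have Y-neighbourhoods close to a fixed set that
   splits Y in a balanced way.  The cut condition for X itself bounds the numbers of vertices of
   low and of high degree by about 5/9 |X| each; as one of the two numbers is tiny, about 4/9 |X|
   vertices have medium degree.  Sorting these into degree buckets of width beta n, each vertex
   has fewer than 2k vertices in its bucket whose neighbourhood is within 2% of its own or of its
   complement, so a greedy matching inside the buckets yields the n/20 required pairs. *)

lemma obtain_two_disjoint_subsets:
  assumes "2 * k \<le> card A"
  obtains A1 A2 where "A1 \<subseteq> A" "A2 \<subseteq> A" "A1 \<inter> A2 = {}" "card A1 = k" "card A2 = k"
proof (cases "finite A")
  case True
  have "k \<le> card A" using assms by linarith
  then obtain A1 where A1: "A1 \<subseteq> A" "card A1 = k" by (meson obtain_subset_with_card_n)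
  have "card A - card A1 \<le> card (A - A1)"
    using A1 True by (intro diff_card_le_card_Diff) (auto intro: finite_subset)
  then have "k \<le> card (A - A1)" using assms A1 by linarith
  then obtain A2 where "A2 \<subseteq> A - A1" "card A2 = k" by (meson obtain_subset_with_card_n)
  with A1 show ?thesis using that by blast
next
  case False
  then have "k = 0" using assms by simp
  then show ?thesis using that[of "{}" "{}"] by simp
qed

lemma sum_bounded_by_parts:
  fixes f :: "'a \<Rightarrow> real" and c1 c2 :: real
  assumes "finite A" "B \<subseteq> A" "\<forall>x\<in>B. f x \<le> c1" "\<forall>x\<in>A - B. f x \<le> c2"
  shows "(\<Sum>x\<in>A. f x) \<le> card B * c1 + card (A - B) * c2"
proof -
  have "(\<Sum>x\<in>A. f x) = (\<Sum>x\<in>B. f x) + (\<Sum>x\<in>A - B. f x)"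
    using assms(1,2) by (metis sum.subset_diff add.commute)
  also have "\<dots> \<le> (\<Sum>x\<in>B. c1) + (\<Sum>x\<in>A - B. c2)"
    using assms(3,4) by (intro add_mono sum_mono) auto
  finally show ?thesis by simp
qed

lemma sum_ge_card_mult_on_subset:
  fixes f :: "'a \<Rightarrow> real" and c :: real
  assumes "finite A" "B \<subseteq> A" "\<forall>x\<in>A. f x \<ge> 0" "\<forall>x\<in>B. f x \<ge> c"
  shows "card B * c \<le> (\<Sum>x\<in>A. f x)"
proof -
  have "card B * c = (\<Sum>x\<in>B. c)" by simp
  also have "\<dots> \<le> (\<Sum>x\<in>B. f x)" using assms(4) by (intro sum_mono) auto
  also have "\<dots> \<le> (\<Sum>x\<in>A. f x)" using assms(1-3) by (intro sum_mono2) auto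
  finally show ?thesis .
qed

lemma card_large_values_ge_half:
  fixes g :: "'a \<Rightarrow> real"
  assumes "finite Y" "\<forall>y\<in>Y. g y \<le> t" "0.8 * t * card Y \<le> (\<Sum>y\<in>Y. g y)" "t > 0"
  shows "0.5 * card Y \<le> real (card {y\<in>Y. g y \<ge> 0.6 * t})"
proof -
  let ?P = "{y\<in>Y. g y \<ge> 0.6 * t}"
  have "(\<Sum>y\<in>Y. g y) \<le> card ?P * t + card (Y - ?P) * (0.6 * t)"
    using assms(1,2) by (intro sum_bounded_by_parts) auto
  moreover have "real (card Y) = card ?P + card (Y - ?P)"
    using assms(1) card_Un_disjoint[of ?P "Y - ?P"] by (simp add: Un_absorb1)
  ultimately have "t * card (Y - ?P) \<le> t * card ?P"
    using assms(3) by (simp add: algebra_simps)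
  then have "card (Y - ?P) \<le> card ?P" using assms(4) by simp
  then show ?thesis using \<open>real (card Y) = card ?P + card (Y - ?P)\<close> by simp
qed

lemma card_sym_diff_Diff:
  assumes "finite Y" "A \<subseteq> Y" "B \<subseteq> Y"
  shows "card (sym_diff A (Y - B)) = card Y - card (sym_diff A B)"
proof -
  have "sym_diff A (Y - B) = Y - sym_diff A B" using assms(2,3) by blast
  moreover have "sym_diff A B \<subseteq> Y" using assms(2,3) by blast
  ultimately show ?thesis using assms(1) card_Diff_subset[of "sym_diff A B" Y]
    by (metis finite_subset)
qed

lemma card_le_classes_mult:
  assumes "finite W" "\<forall>v\<in>W. f v < J" "\<forall>j<J. card {u\<in>W. f u = j} \<le> c"
  shows "card W \<le> c * J"
proof -
  have "card W \<le> card (\<Union>j<J. {u\<in>W. f u = j})"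
    using assms(1,2) by (intro card_mono) auto
  also have "\<dots> \<le> (\<Sum>j<J. card {u\<in>W. f u = j})" by (rule card_UN_le) simp
  also have "\<dots> \<le> (\<Sum>j<J. c)" using assms(3) by (intro sum_mono) auto
  finally show ?thesis by (simp add: mult.commute)
qed

lemma abs_diff_lt_of_div_eq:
  fixes p q w :: nat
  assumes "p div w = q div w" "w > 0"
  shows "\<bar>real p - real q\<bar> < real w"
proof -
  have "real p = real (w * (p div w)) + real (p mod w)" "real q = real (w * (p div w)) + real (q mod w)"
    using assms(1) by (metis div_mult_mod_eq mult.commute of_nat_add)+
  moreover have "real (p mod w) < real w" "real (q mod w) < real w" using assms(2) by simp_all
  ultimately show ?thesis by linarith
qed

definition degsum :: "('a \<Rightarrow> 'a \<Rightarrow> bool) \<Rightarrow> 'a set \<Rightarrow> 'a set \<Rightarrow> real" where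
  "degsum E P Q = (\<Sum>x\<in>P. real (deg E Q x))"

lemma nbhd_subset: "nbhd E Y v \<subseteq> Y"
  unfolding nbhd_def by auto

lemma deg_le_card: "finite Q \<Longrightarrow> deg E Q x \<le> card Q"
  unfolding deg_def nbhd_def by (simp add: card_mono)

lemma deg_Un_disjoint:
  assumes "finite A" "finite B" "A \<inter> B = {}"
  shows "deg E (A \<union> B) x = deg E A x + deg E B x"
proof -
  have "nbhd E (A \<union> B) x = nbhd E A x \<union> nbhd E B x" "nbhd E A x \<inter> nbhd E B x = {}"
    using assms(3) unfolding nbhd_def by auto
  moreover have "finite (nbhd E A x)" "finite (nbhd E B x)"
    using assms unfolding nbhd_def by auto
  ultimately show ?thesis unfolding deg_def by (simp add: card_Un_disjoint)
qed

lemma degsum_eq_e_between: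
  assumes "finite P" "finite Q"
  shows "degsum E P Q = real (e_between E P Q)"
proof -
  have "{(x, y). x \<in> P \<and> y \<in> Q \<and> E x y} = Sigma P (nbhd E Q)"
    unfolding nbhd_def by auto
  then show ?thesis
    unfolding e_between_def degsum_def deg_def using assms by (simp add: nbhd_def)
qed

lemma e_between_commute:
  assumes "\<forall>x y. E x y \<longrightarrow> E y x"
  shows "e_between E P Q = e_between E Q P"
proof -
  have "{(x, y). x \<in> P \<and> y \<in> Q \<and> E x y} = prod.swap ` {(y, x). y \<in> Q \<and> x \<in> P \<and> E y x}"
    using assms by force
  then show ?thesis
    unfolding e_between_def by (simp add: card_image)
qed

lemma degsum_commute:
  assumes "finite P" "finite Q" "\<forall>x y. E x y \<longrightarrow> E y x"
  shows "degsum E P Q = degsum E Q P"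
  using assms by (simp add: degsum_eq_e_between e_between_commute[of E P Q])

lemma degsum_Un_left:
  assumes "finite A" "finite B" "A \<inter> B = {}"
  shows "degsum E (A \<union> B) Q = degsum E A Q + degsum E B Q"
  unfolding degsum_def using assms by (simp add: sum.union_disjoint)

lemma degsum_Un_right:
  assumes "finite A" "finite B" "A \<inter> B = {}"
  shows "degsum E P (A \<union> B) = degsum E P A + degsum E P B"
  unfolding degsum_def deg_Un_disjoint[OF assms] by (simp add: sum.distrib)

lemma degsum_Un3:
  assumes "finite A1" "finite A2" "finite A3" "finite B1" "finite B2" "finite B3"
    "A1 \<inter> A2 = {}" "A1 \<inter> A3 = {}" "A2 \<inter> A3 = {}" "B1 \<inter> B2 = {}" "B1 \<inter> B3 = {}" "B2 \<inter> B3 = {}"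
  shows "degsum E (A1 \<union> A2 \<union> A3) (B1 \<union> B2 \<union> B3) =
     degsum E A1 B1 + degsum E A1 B2 + degsum E A1 B3 + degsum E A2 B1 + degsum E A2 B2
   + degsum E A2 B3 + degsum E A3 B1 + degsum E A3 B2 + degsum E A3 B3"
  using assms by (simp add: degsum_Un_left degsum_Un_right Int_Un_distrib2)

lemma degsum_nonneg: "degsum E P Q \<ge> 0"
  unfolding degsum_def by (simp add: sum_nonneg)

lemma degsum_le_card_mult: "finite Q \<Longrightarrow> degsum E P Q \<le> real (card P) * real (card Q)"
  using sum_mono[of P "\<lambda>x. real (deg E Q x)" "\<lambda>_. real (card Q)"]
  unfolding degsum_def by (simp add: deg_le_card)

lemma degsum_diff_eq_sum_deg:
  assumes "finite B" "finite P" "finite Q" "\<forall>x y. E x y \<longrightarrow> E y x"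
  shows "degsum E P B - degsum E Q B = (\<Sum>y\<in>B. real (deg E P y) - real (deg E Q y))"
  using degsum_commute[OF assms(2,1,4)] degsum_commute[OF assms(3,1,4)]
  unfolding degsum_def by (simp add: sum_subtractf)

section \<open>The switching bound\<close>

definition half_cuts_uniform :: "real \<Rightarrow> 'a set \<Rightarrow> ('a \<Rightarrow> 'a \<Rightarrow> bool) \<Rightarrow> bool" where
  "half_cuts_uniform \<gamma> V E \<longleftrightarrow> (\<forall>X Y. X \<union> Y = V \<longrightarrow> X \<inter> Y = {} \<longrightarrow> card X = card V div 2 \<longrightarrow>
     \<bar>real (e_between E X Y) - real (card X) * real (card Y) / 2\<bar> \<le> \<gamma> * real (card V) ^ 2)"

lemma degsum_half_cut:
  assumes G: "is_graph V E" and cut: "half_cuts_uniform \<gamma> V E"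
    and T: "T \<subseteq> V" "card T = card V div 2"
  shows "\<bar>degsum E T (V - T) - real (card V div 2) * real (card V - card V div 2) / 2\<bar>
           \<le> \<gamma> * real (card V) ^ 2"
proof -
  have fV: "finite V" using G unfolding is_graph_def by auto
  have "card (V - T) = card V - card V div 2"
    using T fV by (simp add: card_Diff_subset finite_subset)
  moreover have "degsum E T (V - T) = real (e_between E T (V - T))"
    using fV T by (intro degsum_eq_e_between) (auto intro: finite_subset)
  moreover have "T \<union> (V - T) = V" "T \<inter> (V - T) = {}" using T by auto
  ultimately show ?thesis using cut T unfolding half_cuts_uniform_def by metis
qed

lemma switching_bound:
  assumes G: "is_graph V E" and cut: "half_cuts_uniform \<gamma> V E"
    and sub: "U1 \<subseteq> V" "W1 \<subseteq> V" "U2 \<subseteq> V" "W2 \<subseteq> V"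
    and disj: "U1 \<inter> W1 = {}" "U1 \<inter> U2 = {}" "U1 \<inter> W2 = {}" "W1 \<inter> U2 = {}" "W1 \<inter> W2 = {}"
      "U2 \<inter> W2 = {}"
    and cards: "card U1 = card W1" "card U2 = card W2" "card U1 + card U2 \<le> card V div 2"
  shows "\<bar>degsum E U1 U2 + degsum E W1 W2 - degsum E U1 W2 - degsum E W1 U2\<bar>
           \<le> 2 * \<gamma> * real (card V) ^ 2"
proof -
  have fV: "finite V" and symE: "\<forall>x y. E x y \<longrightarrow> E y x"
    using G unfolding is_graph_def by auto
  have fin: "finite U1" "finite W1" "finite U2" "finite W2"
    using sub fV by (auto intro: finite_subset)
  define R where "R = V - (U1 \<union> W1 \<union> U2 \<union> W2)"
  have "card (U1 \<union> W1 \<union> U2 \<union> W2) = card U1 + card W1 + card U2 + card W2"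
    using fin disj by (simp add: card_Un_disjoint Int_Un_distrib Int_Un_distrib2 Int_commute)
  then have "card R = card V - (card U1 + card W1 + card U2 + card W2)"
    unfolding R_def using sub fV by (simp add: card_Diff_subset finite_subset)
  then have "card V div 2 - (card U1 + card U2) \<le> card R" using cards by linarith
  then obtain C where C: "C \<subseteq> R" "card C = card V div 2 - (card U1 + card U2)"
    by (meson obtain_subset_with_card_n)
  define D where "D = R - C"
  have fCD: "finite C" "finite D" using C fV unfolding D_def R_def by (auto intro: finite_subset)
  have dCD: "C \<inter> U1 = {}" "C \<inter> W1 = {}" "C \<inter> U2 = {}" "C \<inter> W2 = {}" "C \<inter> D = {}"
      "D \<inter> U1 = {}" "D \<inter> W1 = {}" "D \<inter> U2 = {}" "D \<inter> W2 = {}"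
    using C unfolding D_def R_def by auto
  have V: "V = C \<union> D \<union> U1 \<union> W1 \<union> U2 \<union> W2" using C sub unfolding D_def R_def by auto
  define T where "T = real (card V div 2) * real (card V - card V div 2) / 2"
  \<comment> \<open>C pads each of the four sets C + (U1 or W1) + (U2 or W2) to a half of V.\<close>
  have half: "\<bar>degsum E (C \<union> A \<union> B) (D \<union> A' \<union> B') - T\<bar> \<le> \<gamma> * real (card V) ^ 2"
    if "(A, A') \<in> {(U1, W1), (W1, U1)}" "(B, B') \<in> {(U2, W2), (W2, U2)}" for A A' B B'
  proof -
    have "card (C \<union> A \<union> B) = card C + card A + card B"
      using that dCD disj fCD fin by (auto simp: card_Un_disjoint Int_Un_distrib2)
    moreover have "V - (C \<union> A \<union> B) = D \<union> A' \<union> B'" "C \<union> A \<union> B \<subseteq> V"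
      using that V dCD disj by auto
    ultimately have "V - (C \<union> A \<union> B) = D \<union> A' \<union> B'" "C \<union> A \<union> B \<subseteq> V"
      "card (C \<union> A \<union> B) = card V div 2"
      using that C cards by auto
    then show ?thesis using degsum_half_cut[OF G cut] unfolding T_def by metis
  qed
  have sy: "degsum E W1 U1 = degsum E U1 W1" "degsum E W2 U1 = degsum E U1 W2"
    "degsum E W1 U2 = degsum E U2 W1" "degsum E W2 W1 = degsum E W1 W2"
    "degsum E U2 U1 = degsum E U1 U2" "degsum E W2 U2 = degsum E U2 W2"
    using fin symE by (auto intro: degsum_commute)
  note expand = degsum_Un3[OF fCD(1) _ _ fCD(2)]
  have e: "degsum E (C \<union> A \<union> B) (D \<union> A' \<union> B') =
      degsum E C D + degsum E C A' + degsum E C B' + degsum E A D + degsum E A A' + degsum E A B'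
    + degsum E B D + degsum E B A' + degsum E B B'"
    if "(A, A') \<in> {(U1, W1), (W1, U1)}" "(B, B') \<in> {(U2, W2), (W2, U2)}" for A A' B B'
    using that fin dCD disj by (intro expand) (auto simp: Int_commute)
  show ?thesis
    using half[of U1 W1 U2 W2] half[of W1 U1 U2 W2] half[of U1 W1 W2 U2] half[of W1 U1 W2 U2]
      e[of U1 W1 U2 W2] e[of W1 U1 U2 W2] e[of U1 W1 W2 U2] e[of W1 U1 W2 U2] sy
    unfolding abs_le_iff by simp
qed

section \<open>Vertices of high and of low degree\<close>

lemma card_low_degree_le:
  assumes "finite X" "finite Y"
  shows "0.9 * real (card {x\<in>X. real (deg E Y x) < 0.1 * card Y}) * card Y
           \<le> real (card X) * card Y - degsum E X Y"
proof -
  let ?L = "{x\<in>X. real (deg E Y x) < 0.1 * card Y}"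
  have "degsum E X Y \<le> card ?L * (0.1 * card Y) + card (X - ?L) * real (card Y)"
    unfolding degsum_def using assms deg_le_card[OF assms(2)]
    by (intro sum_bounded_by_parts) (auto simp: less_imp_le)
  moreover have "real (card X) = card ?L + card (X - ?L)"
    using assms(1) card_Un_disjoint[of ?L "X - ?L"] by (simp add: Un_absorb1)
  ultimately show ?thesis by (simp add: algebra_simps)
qed

lemma card_high_degree_le:
  assumes "finite X"
  shows "0.9 * real (card {x\<in>X. real (deg E Y x) > 0.9 * card Y}) * card Y \<le> degsum E X Y"
  using sum_ge_card_mult_on_subset[OF assms, of "{x\<in>X. real (deg E Y x) > 0.9 * card Y}"
      "\<lambda>x. real (deg E Y x)" "0.9 * card Y"]
  unfolding degsum_def by (auto simp: less_imp_le algebra_simps)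

lemma card_prefer_high_block_ge_half:
  assumes fY: "finite Y" and symE: "\<forall>x y. E x y \<longrightarrow> E y x"
    and P: "finite P" "card P = t" "\<forall>x\<in>P. real (deg E Y x) > 0.9 * card Y"
    and Q: "finite Q" "card Q = t" "\<forall>x\<in>Q. real (deg E Y x) < 0.1 * card Y"
    and "t > 0"
  shows "0.5 * card Y \<le> real (card {y\<in>Y. real (deg E P y) - real (deg E Q y) \<ge> 0.6 * t})"
proof (rule card_large_values_ge_half)
  have "real (deg E P y) \<le> t" for y using deg_le_card[OF P(1)] P(2) by simp
  then show "\<forall>y\<in>Y. real (deg E P y) - real (deg E Q y) \<le> real t"
    by (smt (verit) of_nat_0_le_iff)
  have "degsum E P Y \<ge> (\<Sum>x\<in>P. 0.9 * card Y)"
    unfolding degsum_def using P(3) by (intro sum_mono) (auto intro: less_imp_le)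
  moreover have "degsum E Q Y \<le> (\<Sum>x\<in>Q. 0.1 * card Y)"
    unfolding degsum_def using Q(3) by (intro sum_mono) (auto intro: less_imp_le)
  ultimately show "0.8 * t * card Y \<le> (\<Sum>y\<in>Y. real (deg E P y) - real (deg E Q y))"
    using P(2) Q(2) degsum_diff_eq_sum_deg[OF fY P(1) Q(1) symE] by simp
qed (use fY \<open>t > 0\<close> in auto)

lemma no_high_and_low_degree_blocks:
  assumes G: "is_graph V E" and cut: "half_cuts_uniform \<gamma> V E"
    and X: "X \<subseteq> V" "card X = card V div 2" and Y: "Y = V - X"
    and H: "H1 \<subseteq> X" "H2 \<subseteq> X" "H1 \<inter> H2 = {}" "card H1 = t" "card H2 = t"
      "\<forall>x\<in>H1 \<union> H2. real (deg E Y x) > 0.9 * card Y"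
    and L: "L1 \<subseteq> X" "L2 \<subseteq> X" "L1 \<inter> L2 = {}" "card L1 = t" "card L2 = t"
      "\<forall>x\<in>L1 \<union> L2. real (deg E Y x) < 0.1 * card Y"
    and t: "t > 0" "2 * t \<le> card V div 2" "real (2 * t) \<le> 0.5 * card Y"
      "0.2 * real t ^ 2 > 4 * \<gamma> * real (card V) ^ 2"
  shows False
proof -
  have fV: "finite V" and symE: "\<forall>x y. E x y \<longrightarrow> E y x"
    using G unfolding is_graph_def by auto
  have fY: "finite Y" using fV Y by auto
  have fX: "finite X" using finite_subset[OF X(1) fV] .
  have fin: "finite H1" "finite H2" "finite L1" "finite L2"
    using finite_subset[OF H(1) fX] finite_subset[OF H(2) fX] finite_subset[OF L(1) fX]
      finite_subset[OF L(2) fX] .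
  have favoured: "0.5 * card Y \<le> real (card {y\<in>Y. real (deg E P y) - real (deg E Q y) \<ge> 0.6 * t})"
    if "P \<in> {H1, H2}" "Q \<in> {L1, L2}" for P Q
    using that H L fin t(1) by (intro card_prefer_high_block_ge_half[OF fY symE]) auto
  define Yp where "Yp = {y\<in>Y. real (deg E H1 y) - real (deg E L1 y) \<ge> 0.6 * t}"
  define Yq where "Yq = {y\<in>Y. real (deg E H2 y) - real (deg E L2 y) \<ge> 0.6 * t}"
  have cYp: "real (2 * t) \<le> card Yp" and cYq: "real (2 * t) \<le> card Yq"
    using favoured[of H1 L1] favoured[of H2 L2] H L t unfolding Yp_def Yq_def by auto
  obtain B where B: "B \<subseteq> Yp" "card B = t"
    using cYp by (metis obtain_subset_with_card_n of_nat_le_iff le_add2 mult_2 order_trans)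
  have fB: "finite B" "finite Yq" using B fY unfolding Yp_def Yq_def by (auto intro: finite_subset)
  have "card (Yq - B) \<ge> t" using diff_card_le_card_Diff[OF fB(1), of Yq] cYq B by linarith
  then obtain A where A: "A \<subseteq> Yq - B" "card A = t" by (meson obtain_subset_with_card_n)
  have fA: "finite A" using A fB by (auto intro: finite_subset)
  have AB: "A \<subseteq> Y" "B \<subseteq> Y" "A \<inter> B = {}" using A B unfolding Yp_def Yq_def by auto
  have XY: "X \<inter> Y = {}" "Y \<subseteq> V" using Y by auto
  \<comment> \<open>Subtracting the switching bounds for H1, H2 and for L1, L2 against A, B leaves
    e(H1, H2) - e(L1, L2) \<ge> 1.2 t^2 - 4 \<gamma> n^2, whereas e(H1, H2) \<le> t^2.\<close>
  have K1: "\<bar>degsum E H1 H2 + degsum E A B - degsum E H1 B - degsum E A H2\<bar>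
              \<le> 2 * \<gamma> * real (card V) ^ 2"
    by (rule switching_bound[OF G cut]) (use H(1-5) A(2) B(2) AB X XY t(2) in auto)
  have K2: "\<bar>degsum E L1 L2 + degsum E A B - degsum E L1 B - degsum E A L2\<bar>
              \<le> 2 * \<gamma> * real (card V) ^ 2"
    by (rule switching_bound[OF G cut]) (use L(1-5) A(2) B(2) AB X XY t(2) in auto)
  have "(\<Sum>y\<in>B. 0.6 * t) \<le> (\<Sum>y\<in>B. real (deg E H1 y) - real (deg E L1 y))"
    using B unfolding Yp_def by (intro sum_mono) auto
  then have "degsum E H1 B - degsum E L1 B \<ge> 0.6 * t * t"
    using B degsum_diff_eq_sum_deg[OF fB(1) fin(1) fin(3) symE] by simp
  moreover have "(\<Sum>y\<in>A. 0.6 * t) \<le> (\<Sum>y\<in>A. real (deg E H2 y) - real (deg E L2 y))"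
    using A unfolding Yq_def by (intro sum_mono) auto
  then have "degsum E H2 A - degsum E L2 A \<ge> 0.6 * t * t"
    using A degsum_diff_eq_sum_deg[OF fA fin(2) fin(4) symE] by simp
  moreover have "degsum E A H2 = degsum E H2 A" "degsum E A L2 = degsum E L2 A"
    using degsum_commute fA fin symE by auto
  moreover have "degsum E H1 H2 \<le> real t * real t"
    using degsum_le_card_mult[OF fin(2), of E H1] H by simp
  moreover have "degsum E L1 L2 \<ge> 0" by (rule degsum_nonneg)
  ultimately have "1.2 * real t * real t \<le> real t * real t + 4 * \<gamma> * real (card V) ^ 2"
    using K1 K2 unfolding abs_le_iff by linarith
  then show False using t(4) by (simp add: power2_eq_square)
qed

lemma few_high_or_few_low_degree:
  assumes G: "is_graph V E" and cut: "half_cuts_uniform \<gamma> V E"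
    and X: "X \<subseteq> V" "card X = card V div 2" and Y: "Y = V - X"
    and t: "t > 0" "2 * t \<le> card V div 2" "real (2 * t) \<le> 0.5 * card Y"
      "0.2 * real t ^ 2 > 4 * \<gamma> * real (card V) ^ 2"
  shows "card {x\<in>X. real (deg E Y x) < 0.1 * card Y} < 2 * t
           \<or> card {x\<in>X. real (deg E Y x) > 0.9 * card Y} < 2 * t"
proof (rule ccontr)
  assume "\<not> ?thesis"
  then have "2 * t \<le> card {x\<in>X. real (deg E Y x) < 0.1 * card Y}"
    "2 * t \<le> card {x\<in>X. real (deg E Y x) > 0.9 * card Y}" by auto
  then obtain L1 L2 H1 H2 where
    L: "L1 \<subseteq> {x\<in>X. real (deg E Y x) < 0.1 * card Y}" "L2 \<subseteq> {x\<in>X. real (deg E Y x) < 0.1 * card Y}"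
      "L1 \<inter> L2 = {}" "card L1 = t" "card L2 = t" and
    H: "H1 \<subseteq> {x\<in>X. real (deg E Y x) > 0.9 * card Y}" "H2 \<subseteq> {x\<in>X. real (deg E Y x) > 0.9 * card Y}"
      "H1 \<inter> H2 = {}" "card H1 = t" "card H2 = t"
    by (elim obtain_two_disjoint_subsets)
  show False
    by (rule no_high_and_low_degree_blocks[OF G cut X Y, of H1 H2 t L1 L2]) (use L H t in auto)
qed

lemma card_medium_degree_ge:
  assumes G: "is_graph V E" and cut: "half_cuts_uniform \<gamma> V E"
    and X: "X \<subseteq> V" "card X = card V div 2" and Y: "Y = V - X" and Ypos: "card Y > 0"
    and t: "t > 0" "2 * t \<le> card V div 2" "real (2 * t) \<le> 0.5 * card Y"
      "0.2 * real t ^ 2 > 4 * \<gamma> * real (card V) ^ 2"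
  shows "real (card X) \<le> card {x\<in>X. 0.1 * card Y \<le> real (deg E Y x) \<and> real (deg E Y x) \<le> 0.9 * card Y}
           + 2 * t + (real (card X) * card Y / 2 + \<gamma> * real (card V) ^ 2) / (0.9 * card Y)"
proof -
  have fV: "finite V" using G unfolding is_graph_def by auto
  have fX: "finite X" and fY: "finite Y" using fV X Y finite_subset by auto
  define L where "L = {x\<in>X. real (deg E Y x) < 0.1 * card Y}"
  define H where "H = {x\<in>X. real (deg E Y x) > 0.9 * card Y}"
  define M where "M = {x\<in>X. 0.1 * card Y \<le> real (deg E Y x) \<and> real (deg E Y x) \<le> 0.9 * card Y}"
  define B where "B = (real (card X) * card Y / 2 + \<gamma> * real (card V) ^ 2) / (0.9 * card Y)"
  have "X = M \<union> L \<union> H" "M \<inter> L = {}" "(M \<union> L) \<inter> H = {}" unfolding L_def H_def M_def by auto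
  then have cX: "card X = card M + card L + card H"
    using fX by (metis card_Un_disjoint finite_Un)
  have "card V - card V div 2 = card Y" using X Y fV by (simp add: card_Diff_subset finite_subset)
  then have "\<bar>degsum E X Y - real (card X) * card Y / 2\<bar> \<le> \<gamma> * real (card V) ^ 2"
    using degsum_half_cut[OF G cut X] X Y by simp
  then have "0.9 * real (card L) * card Y \<le> real (card X) * card Y / 2 + \<gamma> * real (card V) ^ 2"
    "0.9 * real (card H) * card Y \<le> real (card X) * card Y / 2 + \<gamma> * real (card V) ^ 2"
    using card_low_degree_le[OF fX fY, of E] card_high_degree_le[OF fX, where E = E and Y = Y]
    unfolding L_def H_def abs_le_iff by linarith+
  then have "real (card L) \<le> B" "real (card H) \<le> B"
    unfolding B_def using Ypos by (simp_all add: field_simps)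
  moreover have "card L < 2 * t \<or> card H < 2 * t"
    unfolding L_def H_def by (rule few_high_or_few_low_degree[OF G cut X Y t])
  ultimately show ?thesis using cX unfolding M_def[symmetric] B_def[symmetric] by linarith
qed

section \<open>Neighbourhoods close to a fixed set\<close>

lemma deg_diff_ge_card_sym_diff:
  assumes fY: "finite Y" and N: "N \<subseteq> Y" and P: "P \<subseteq> N" and Q: "Q \<subseteq> Y - N"
  shows "real (card P) - real (card (sym_diff (nbhd E Y u) N)) \<le> real (deg E P u) - real (deg E Q u)"
proof -
  let ?Nu = "nbhd E Y u"
  have fP: "finite P" "finite Q" using fY N P Q by (auto intro: finite_subset)
  have "nbhd E P u = P - (P - ?Nu)" using P N unfolding nbhd_def by auto
  then have "card (nbhd E P u) = card P - card (P - ?Nu)" using fP by (simp add: card_Diff_subset)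
  then have dP: "real (deg E P u) = real (card P) - real (card (P - ?Nu))"
    unfolding deg_def by (simp add: of_nat_diff card_mono fP)
  have dQ: "nbhd E Q u = Q \<inter> ?Nu" using Q unfolding nbhd_def by auto
  have "(P - ?Nu) \<union> (Q \<inter> ?Nu) \<subseteq> sym_diff ?Nu N" using P Q by auto
  moreover have "finite (sym_diff ?Nu N)" using fY N unfolding nbhd_def by (auto intro: finite_subset)
  ultimately have "card ((P - ?Nu) \<union> (Q \<inter> ?Nu)) \<le> card (sym_diff ?Nu N)" by (rule card_mono[rotated])
  moreover have "card ((P - ?Nu) \<union> (Q \<inter> ?Nu)) = card (P - ?Nu) + card (Q \<inter> ?Nu)"
    using fP P Q by (intro card_Un_disjoint) auto
  ultimately show ?thesis using dP dQ unfolding deg_def by simp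
qed

text \<open>By the switching bound, any set W of the size of U inherits the preference of U for N
  over Y - N.\<close>

lemma preference_transfers:
  assumes G: "is_graph V E" and cut: "half_cuts_uniform \<gamma> V E"
    and X: "X \<subseteq> V" and Y: "Y = V - X" and N: "N \<subseteq> Y"
    and U: "U \<subseteq> X" "card U = k" "\<forall>u\<in>U. real (card (sym_diff (nbhd E Y u) N)) \<le> \<delta>"
    and P: "P \<subseteq> N" "card P = a" and Q: "Q \<subseteq> Y - N" "card Q = a"
    and W: "W \<subseteq> Y" "W \<inter> P = {}" "W \<inter> Q = {}" "card W = k"
    and ka: "k + a \<le> card V div 2"
  shows "k * (a - \<delta>) - 2 * \<gamma> * real (card V) ^ 2 \<le> degsum E W P - degsum E W Q"
proof -
  have fY: "finite Y" using G Y unfolding is_graph_def by auto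
  have "(\<Sum>u\<in>U. a - \<delta>) \<le> (\<Sum>u\<in>U. real (deg E P u) - real (deg E Q u))"
    using U(3) P(2) deg_diff_ge_card_sym_diff[OF fY N P(1) Q(1)]
    by (intro sum_mono) (smt (verit))
  then have "k * (a - \<delta>) \<le> degsum E U P - degsum E U Q"
    using U(2) unfolding degsum_def by (simp add: sum_subtractf)
  moreover have "\<bar>degsum E U P + degsum E W Q - degsum E U Q - degsum E W P\<bar> \<le> 2 * \<gamma> * real (card V) ^ 2"
    by (rule switching_bound[OF G cut]) (use X Y N U P Q W ka in auto)
  ultimately show ?thesis unfolding abs_le_iff by linarith
qed

lemma few_deviating_vertices:
  fixes c :: real
  assumes avg: "\<And>W. W \<subseteq> R \<Longrightarrow> card W = k \<Longrightarrow> k * (a - c) \<le> degsum E W P - degsum E W Q"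
    and k: "k > 0" and P: "finite P" "card P = a"
  shows "card {r\<in>R. real (deg E P r) < a - c} < k" "card {r\<in>R. real (deg E Q r) > c} < k"
proof -
  show "card {r\<in>R. real (deg E P r) < a - c} < k"
  proof (rule ccontr)
    assume "\<not> ?thesis"
    then obtain W where "W \<subseteq> {r\<in>R. real (deg E P r) < a - c}" "card W = k"
      by (meson not_less obtain_subset_with_card_n)
    then have W: "W \<subseteq> R" "card W = k" "\<forall>r\<in>W. real (deg E P r) < a - c" by auto
    have "degsum E W P < (\<Sum>r\<in>W. a - c)"
      unfolding degsum_def using W k by (intro sum_strict_mono) (auto intro: card_ge_0_finite)
    then show False using avg[OF W(1,2)] W(2) degsum_nonneg[of E W Q] by simp
  qed
  show "card {r\<in>R. real (deg E Q r) > c} < k"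
  proof (rule ccontr)
    assume "\<not> ?thesis"
    then obtain W where "W \<subseteq> {r\<in>R. real (deg E Q r) > c}" "card W = k"
      by (meson not_less obtain_subset_with_card_n)
    then have W: "W \<subseteq> R" "card W = k" "\<forall>r\<in>W. real (deg E Q r) > c" by auto
    have "degsum E W Q > (\<Sum>r\<in>W. c)"
      unfolding degsum_def using W k by (intro sum_strict_mono) (auto intro: card_ge_0_finite)
    moreover have "degsum E W P \<le> real k * real a"
      using degsum_le_card_mult[OF P(1), of E W] P(2) W(2) by simp
    ultimately show False using avg[OF W(1,2)] W(2) by (simp add: algebra_simps)
  qed
qed

lemma no_lopsided_degrees:
  fixes c :: real
  assumes fin: "finite P" "finite Q" and cards: "card P = a" "card Q = a"
    and symE: "\<forall>x y. E x y \<longrightarrow> E y x"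
    and low: "card {q\<in>Q. real (deg E P q) < a - c} < k"
    and high: "card {p\<in>P. real (deg E Q p) > c} < k"
    and c: "c \<ge> 0" "real a > 2 * k + 2 * c"
  shows False
proof -
  let ?Low = "{q\<in>Q. real (deg E P q) < a - c}" and ?High = "{p\<in>P. real (deg E Q p) > c}"
  have "real (card (Q - ?Low)) * (a - c) \<le> degsum E Q P"
    unfolding degsum_def using fin by (intro sum_ge_card_mult_on_subset) auto
  moreover have "real a - k \<le> card (Q - ?Low)"
    using low cards(2) diff_card_le_card_Diff[of ?Low Q] fin by (simp add: of_nat_diff)
  moreover have "real a - c \<ge> 0" using c by simp
  ultimately have lo: "(real a - k) * (a - c) \<le> degsum E Q P"
    by (meson mult_right_mono order_trans)
  have "degsum E P Q \<le> card ?High * real a + card (P - ?High) * c"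
    unfolding degsum_def using fin deg_le_card[OF fin(2)] cards(2)
    by (intro sum_bounded_by_parts) auto
  moreover have "card (P - ?High) \<le> a" using card_mono[OF fin(1) Diff_subset] cards(1) by simp
  then have "card (P - ?High) * c \<le> a * c" using c(1) by (intro mult_right_mono) auto
  moreover have "card ?High * real a \<le> k * real a" using high by (intro mult_right_mono) auto
  ultimately have hi: "degsum E P Q \<le> k * real a + a * c" by linarith
  have "(real a - k) * (a - c) \<le> k * real a + a * c"
    using lo hi degsum_commute[OF fin symE] by linarith
  moreover have "real a * (real a - 2 * k - 2 * c) > 0" using c by (intro mult_pos_pos) auto
  moreover have "(real a - k) * (a - c) = real a * (real a - 2 * k - 2 * c) + k * c + (k * real a + a * c)"
    by (simp add: algebra_simps)
  ultimately show False using c(1) by (smt (verit) mult_nonneg_nonneg of_nat_0_le_iff)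
qed

lemma few_neighbourhoods_near_balanced_set:
  assumes G: "is_graph V E" and cut: "half_cuts_uniform \<gamma> V E"
    and X: "X \<subseteq> V" and Y: "Y = V - X"
    and N: "N \<subseteq> Y" "2 * a \<le> card N" "2 * a \<le> card (Y - N)"
    and k: "k > 0" "k + a \<le> card V div 2"
    and a: "real a > 2 * k + 2 * \<delta> + 4 * \<gamma> * real (card V) ^ 2 / k"
    and nonneg: "\<gamma> \<ge> 0" "\<delta> \<ge> 0"
  shows "card {u\<in>X. real (card (sym_diff (nbhd E Y u) N)) \<le> \<delta>} < k"
proof (rule ccontr)
  assume "\<not> ?thesis"
  then obtain U where "U \<subseteq> {u\<in>X. real (card (sym_diff (nbhd E Y u) N)) \<le> \<delta>}" "card U = k"
    by (meson not_less obtain_subset_with_card_n)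
  then have U: "U \<subseteq> X" "card U = k" "\<forall>u\<in>U. real (card (sym_diff (nbhd E Y u) N)) \<le> \<delta>"
    by auto
  have fV: "finite V" and symE: "\<forall>x y. E x y \<longrightarrow> E y x" using G unfolding is_graph_def by auto
  obtain P1 P2 where P: "P1 \<subseteq> N" "P2 \<subseteq> N" "P1 \<inter> P2 = {}" "card P1 = a" "card P2 = a"
    using N(2) by (rule obtain_two_disjoint_subsets)
  obtain Q1 Q2 where Q: "Q1 \<subseteq> Y - N" "Q2 \<subseteq> Y - N" "Q1 \<inter> Q2 = {}" "card Q1 = a" "card Q2 = a"
    using N(3) by (rule obtain_two_disjoint_subsets)
  have fY: "finite Y" using fV Y by simp
  have fN: "finite N" using finite_subset[OF N(1) fY] .
  have fin: "finite P1" "finite P2" "finite Q2"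
    using finite_subset[OF P(1) fN] finite_subset[OF P(2) fN] finite_subset[OF Q(2)] fY by auto
  note transfer = preference_transfers[OF G cut X Y N(1) U]
  define c where "c = \<delta> + 2 * \<gamma> * real (card V) ^ 2 / k"
  have c: "k * (a - c) = k * (a - \<delta>) - 2 * \<gamma> * real (card V) ^ 2" "c \<ge> 0" "real a > 2 * real k + 2 * c"
    unfolding c_def using k a nonneg by (simp_all add: field_simps)
  \<comment> \<open>Almost every vertex of Q2 sees almost all of P1, but almost no vertex of P1 sees much
    of Q2: the two counts of e(P1, Q2) contradict each other.\<close>
  have "card {q\<in>Q2. real (deg E P1 q) < a - c} < k"
  proof (rule few_deviating_vertices(1)[where Q = Q1, OF _ k(1) fin(1) P(4)])
    fix W assume "W \<subseteq> Q2" "card W = k"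
    then show "k * (a - c) \<le> degsum E W P1 - degsum E W Q1"
      unfolding c(1) using P Q k(2) by (intro transfer) auto
  qed
  moreover have "card {p\<in>P1. real (deg E Q2 p) > c} < k"
  proof (rule few_deviating_vertices(2)[where P = P2, OF _ k(1) fin(2) P(5)])
    fix W assume "W \<subseteq> P1" "card W = k"
    then show "k * (a - c) \<le> degsum E W P2 - degsum E W Q2"
      unfolding c(1) using P Q N k(2) by (intro transfer) auto
  qed
  ultimately show False
    using no_lopsided_degrees[OF fin(1,3) P(4) Q(5) symE _ _ c(2,3)] by blast
qed

lemma few_close_or_far_neighbourhoods:
  assumes G: "is_graph V E" and cut: "half_cuts_uniform \<gamma> V E"
    and X: "X \<subseteq> V" and Y: "Y = V - X"
    and v: "0.1 * card Y \<le> real (deg E Y v)" "real (deg E Y v) \<le> 0.9 * card Y"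
    and k: "k > 0" "k + a \<le> card V div 2"
    and a: "real a > 2 * k + 2 * (0.02 * card Y) + 4 * \<gamma> * real (card V) ^ 2 / k" "20 * a \<le> card Y"
    and gamma: "\<gamma> \<ge> 0"
  shows "card {u\<in>X. \<not> (0.02 * card Y \<le> real (card (sym_diff (nbhd E Y v) (nbhd E Y u)))
                     \<and> real (card (sym_diff (nbhd E Y v) (nbhd E Y u))) \<le> 0.98 * card Y)} < 2 * k"
proof -
  have fV: "finite V" using G unfolding is_graph_def by auto
  have fY: "finite Y" and fX: "finite X" using fV X Y finite_subset by auto
  let ?Nv = "nbhd E Y v"
  let ?near = "\<lambda>N. {u\<in>X. real (card (sym_diff (nbhd E Y u) N)) \<le> 0.02 * card Y}"
  have "real (card (Y - ?Nv)) = real (card Y) - real (deg E Y v)"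
    unfolding deg_def using fY nbhd_subset[of E Y v] card_mono[OF fY nbhd_subset[of E Y v]]
    by (simp add: card_Diff_subset finite_subset of_nat_diff)
  moreover have "real (2 * a) \<le> 0.1 * card Y" using a(2) by linarith
  ultimately have "2 * a \<le> card ?Nv" "2 * a \<le> card (Y - ?Nv)"
    using v unfolding deg_def by linarith+
  moreover have "Y - (Y - ?Nv) = ?Nv" using nbhd_subset[of E Y v] by blast
  ultimately have large: "2 * a \<le> card ?Nv" "2 * a \<le> card (Y - ?Nv)" "2 * a \<le> card (Y - (Y - ?Nv))"
    by simp_all
  have near: "card (?near ?Nv) < k" "card (?near (Y - ?Nv)) < k"
    by (rule few_neighbourhoods_near_balanced_set[OF G cut X Y];
        use large k a gamma in \<open>auto simp: nbhd_def\<close>)+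
  have "{u\<in>X. \<not> (0.02 * card Y \<le> real (card (sym_diff ?Nv (nbhd E Y u)))
                 \<and> real (card (sym_diff ?Nv (nbhd E Y u))) \<le> 0.98 * card Y)}
        \<subseteq> ?near ?Nv \<union> ?near (Y - ?Nv)"
  proof (intro subsetI)
    fix u assume u: "u \<in> {u\<in>X. \<not> (0.02 * card Y \<le> real (card (sym_diff ?Nv (nbhd E Y u)))
                 \<and> real (card (sym_diff ?Nv (nbhd E Y u))) \<le> 0.98 * card Y)}"
    let ?d = "card (sym_diff ?Nv (nbhd E Y u))"
    have comm: "sym_diff (nbhd E Y u) ?Nv = sym_diff ?Nv (nbhd E Y u)" by blast
    have "real ?d < 0.02 * card Y \<or> real ?d > 0.98 * card Y" using u by auto
    then show "u \<in> ?near ?Nv \<union> ?near (Y - ?Nv)"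
    proof
      assume "real ?d < 0.02 * card Y"
      then show ?thesis using u comm by auto
    next
      assume far: "real ?d > 0.98 * card Y"
      have "card (sym_diff (nbhd E Y u) (Y - ?Nv)) = card Y - ?d"
        using fY comm by (simp add: card_sym_diff_Diff nbhd_subset)
      moreover have "?d \<le> card Y" using fY by (intro card_mono) (auto simp: nbhd_def)
      ultimately have "real (card (sym_diff (nbhd E Y u) (Y - ?Nv))) \<le> 0.02 * card Y"
        using far by (simp add: of_nat_diff)
      then show ?thesis using u by auto
    qed
  qed
  then have "card {u\<in>X. \<not> (0.02 * card Y \<le> real (card (sym_diff ?Nv (nbhd E Y u)))
                 \<and> real (card (sym_diff ?Nv (nbhd E Y u))) \<le> 0.98 * card Y)}
        \<le> card (?near ?Nv \<union> ?near (Y - ?Nv))"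
    using fX by (intro card_mono) auto
  also have "\<dots> \<le> card (?near ?Nv) + card (?near (Y - ?Nv))" by (rule card_Un_le)
  finally show ?thesis using near by linarith
qed

section \<open>Matching inside degree buckets\<close>

text \<open>Remove an R-related pair and recurse; once no such pair is left, every class has at most
  c elements.\<close>

lemma greedy_class_matching:
  fixes W :: "'a set" and f :: "'a \<Rightarrow> nat"
  assumes "finite W" "\<forall>v\<in>W. f v < J" "\<forall>v\<in>W. card {u\<in>W. f u = f v \<and> \<not> R v u} \<le> c"
    "\<forall>u v. R v u \<longrightarrow> u \<noteq> v"
  shows "\<exists>ps. distinct (map fst ps @ map snd ps) \<and> (\<forall>p\<in>set ps. fst p \<in> W \<and> snd p \<in> W \<and> R (fst p) (snd p))
           \<and> card W \<le> 2 * length ps + c * J"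
  using assms
proof (induction "card W" arbitrary: W rule: less_induct)
  case less
  show ?case
  proof (cases "\<exists>v\<in>W. \<exists>u\<in>W. R v u")
    case True
    then obtain v u where vu: "v \<in> W" "u \<in> W" "R v u" by blast
    have uv: "u \<noteq> v" using vu less.prems(4) by blast
    define W' where "W' = W - {v, u}"
    have cW': "card W' = card W - 2"
      unfolding W'_def using vu uv less.prems(1) by (simp add: card_Diff_subset)
    moreover have "card W > 0" using vu less.prems(1) card_gt_0_iff by blast
    moreover have "\<forall>x\<in>W'. card {y\<in>W'. f y = f x \<and> \<not> R x y} \<le> c"
    proof
      fix x assume x: "x \<in> W'"
      have "card {y\<in>W'. f y = f x \<and> \<not> R x y} \<le> card {y\<in>W. f y = f x \<and> \<not> R x y}"
        using less.prems(1) unfolding W'_def by (intro card_mono) auto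
      then show "card {y\<in>W'. f y = f x \<and> \<not> R x y} \<le> c" using less.prems(3) x W'_def by force
    qed
    ultimately obtain ps where ps: "distinct (map fst ps @ map snd ps)"
       "\<forall>p\<in>set ps. fst p \<in> W' \<and> snd p \<in> W' \<and> R (fst p) (snd p)" "card W' \<le> 2 * length ps + c * J"
      using less.hyps[of W'] less.prems(1,2,4) unfolding W'_def by auto
    have "v \<notin> fst ` set ps" "v \<notin> snd ` set ps" "u \<notin> fst ` set ps" "u \<notin> snd ` set ps"
      using ps(2) W'_def by auto
    then have "distinct (map fst ((v, u) # ps) @ map snd ((v, u) # ps))"
      using ps(1) uv by auto
    moreover have "\<forall>p\<in>set ((v, u) # ps). fst p \<in> W \<and> snd p \<in> W \<and> R (fst p) (snd p)"
      using ps(2) vu W'_def by auto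
    moreover have "card W \<le> 2 * length ((v, u) # ps) + c * J"
      using ps(3) cW' by simp
    ultimately show ?thesis by blast
  next
    case False
    have "card {u\<in>W. f u = j} \<le> c" for j
    proof (cases "{u\<in>W. f u = j} = {}")
      case True
      then show ?thesis unfolding True by simp
    next
      case False
      then obtain v where v: "v \<in> W" "f v = j" by blast
      then have "{u\<in>W. f u = j} = {u\<in>W. f u = f v \<and> \<not> R v u}"
        using \<open>\<not> (\<exists>v\<in>W. \<exists>u\<in>W. R v u)\<close> by auto
      then show ?thesis using less.prems(3) v by metis
    qed
    then have "card W \<le> c * J" using card_le_classes_mult less.prems(1,2) by blast
    then show ?thesis by (intro exI[of _ "[]"]) simp
  qed
qed

definition good_pair :: "real \<Rightarrow> nat \<Rightarrow> ('a \<Rightarrow> 'a \<Rightarrow> bool) \<Rightarrow> 'a set \<Rightarrow> 'a \<Rightarrow> 'a \<Rightarrow> bool" where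
  "good_pair \<beta> n E Y v u \<longleftrightarrow> \<bar>real (deg E Y v) - real (deg E Y u)\<bar> \<le> \<beta> * real n \<and>
     0.02 * card Y \<le> real (card (sym_diff (nbhd E Y v) (nbhd E Y u))) \<and>
     real (card (sym_diff (nbhd E Y v) (nbhd E Y u))) \<le> 0.98 * card Y \<and>
     0.1 * card Y \<le> real (deg E Y v) \<and> real (deg E Y v) \<le> 0.9 * card Y \<and>
     0.1 * card Y \<le> real (deg E Y u) \<and> real (deg E Y u) \<le> 0.9 * card Y"

lemma host_good_of_good_pairs:
  assumes XY: "X \<union> Y = V" "X \<inter> Y = {}" "card X = card V div 2"
    and len: "nat \<lceil>real (card V) / 20\<rceil> \<le> length ps"
    and dist: "distinct (map fst ps @ map snd ps)"
    and P: "\<forall>p\<in>set ps. fst p \<in> X \<and> snd p \<in> X \<and> good_pair \<beta> (card V) E Y (fst p) (snd p)"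
  shows "host_good \<beta> V E"
proof -
  define m where "m = nat \<lceil>real (card V) / 20\<rceil>"
  define xs where "xs = (\<lambda>i. fst (ps ! i))"
  define xs' where "xs' = (\<lambda>i. snd (ps ! i))"
  have mem: "ps ! i \<in> set ps" if "i < m" for i
    using that len unfolding m_def by (meson nth_mem order_less_le_trans)
  have d: "distinct (map fst ps)" "distinct (map snd ps)" "set (map fst ps) \<inter> set (map snd ps) = {}"
    using dist by auto
  have "inj_on (\<lambda>p. if fst p then xs (snd p) else xs' (snd p)) (UNIV \<times> {..<m})"
  proof (rule inj_onI)
    fix p q assume "p \<in> UNIV \<times> {..<m}" "q \<in> UNIV \<times> {..<m}"
      and eq: "(if fst p then xs (snd p) else xs' (snd p)) = (if fst q then xs (snd q) else xs' (snd q))"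
    then obtain b c i j where bi: "p = (b, i)" "q = (c, j)" "i < m" "j < m" by auto
    then have i: "i < length ps" "j < length ps"
      using len unfolding m_def by (meson order_less_le_trans)+
    have "fst (ps ! i) = fst (ps ! j) \<Longrightarrow> i = j" "snd (ps ! i) = snd (ps ! j) \<Longrightarrow> i = j"
      using d(1,2) i by (metis length_map nth_eq_iff_index_eq nth_map)+
    moreover have "fst (ps ! i) \<noteq> snd (ps ! j)" "snd (ps ! i) \<noteq> fst (ps ! j)"
      using d(3) i by (force simp: set_conv_nth)+
    ultimately show "p = q" using eq bi unfolding xs_def xs'_def by (cases b; cases c) auto
  qed
  moreover have "xs i \<in> X \<and> xs' i \<in> X \<and> good_pair \<beta> (card V) E Y (xs i) (xs' i)" if "i < m" for i
    using mem[OF that] P unfolding xs_def xs'_def by blast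
  ultimately show ?thesis
    unfolding host_good_def Let_def good_pair_def using XY m_def by blast
qed

lemma many_good_pairs:
  fixes \<beta> :: real
  assumes G: "is_graph V E" and cut: "half_cuts_uniform \<gamma> V E"
    and X: "X \<subseteq> V" and Y: "Y = V - X" and Ypos: "card Y > 0"
    and k: "k > 0" "k + a \<le> card V div 2"
    and a: "real a > 2 * k + 2 * (0.02 * card Y) + 4 * \<gamma> * real (card V) ^ 2 / k" "20 * a \<le> card Y"
    and gamma: "\<gamma> \<ge> 0" and w: "w > 0" "real w \<le> \<beta> * card V"
  shows "\<exists>ps. distinct (map fst ps @ map snd ps)
           \<and> (\<forall>p\<in>set ps. fst p \<in> X \<and> snd p \<in> X \<and> good_pair \<beta> (card V) E Y (fst p) (snd p))
           \<and> card {x\<in>X. 0.1 * card Y \<le> real (deg E Y x) \<and> real (deg E Y x) \<le> 0.9 * card Y}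
               \<le> 2 * length ps + 2 * k * (card Y div w + 1)"
proof -
  have fV: "finite V" using G unfolding is_graph_def by auto
  have fX: "finite X" and fY: "finite Y" using fV X Y finite_subset by auto
  define M where "M = {x\<in>X. 0.1 * card Y \<le> real (deg E Y x) \<and> real (deg E Y x) \<le> 0.9 * card Y}"
  define sd where "sd = (\<lambda>v u. real (card (sym_diff (nbhd E Y v) (nbhd E Y u))))"
  define R where "R = (\<lambda>v u. u \<noteq> v \<and> deg E Y u div w = deg E Y v div w
                               \<and> 0.02 * card Y \<le> sd v u \<and> sd v u \<le> 0.98 * card Y)"
  have fM: "finite M" using fX unfolding M_def by simp
  have buckets: "\<forall>v\<in>M. deg E Y v div w < card Y div w + 1"
    using deg_le_card[OF fY] by (simp add: div_le_mono le_imp_less_Suc)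
  have few_bad: "\<forall>v\<in>M. card {u\<in>M. deg E Y u div w = deg E Y v div w \<and> \<not> R v u} \<le> 2 * k"
  proof
    fix v assume v: "v \<in> M"
    have "{u\<in>M. deg E Y u div w = deg E Y v div w \<and> \<not> R v u}
          \<subseteq> {u\<in>X. \<not> (0.02 * card Y \<le> sd v u \<and> sd v u \<le> 0.98 * card Y)}"
      using v Ypos by (auto simp: R_def M_def sd_def)
    then have "card {u\<in>M. deg E Y u div w = deg E Y v div w \<and> \<not> R v u}
          \<le> card {u\<in>X. \<not> (0.02 * card Y \<le> sd v u \<and> sd v u \<le> 0.98 * card Y)}"
      using fX by (intro card_mono) auto
    moreover have "card {u\<in>X. \<not> (0.02 * card Y \<le> sd v u \<and> sd v u \<le> 0.98 * card Y)} < 2 * k"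
      using few_close_or_far_neighbourhoods[OF G cut X Y _ _ k a gamma, of v] v
      unfolding M_def sd_def by auto
    ultimately show "card {u\<in>M. deg E Y u div w = deg E Y v div w \<and> \<not> R v u} \<le> 2 * k"
      by linarith
  qed
  have "\<forall>u v. R v u \<longrightarrow> u \<noteq> v" unfolding R_def by auto
  then obtain ps where ps: "distinct (map fst ps @ map snd ps)"
      "\<forall>p\<in>set ps. fst p \<in> M \<and> snd p \<in> M \<and> R (fst p) (snd p)"
      "card M \<le> 2 * length ps + 2 * k * (card Y div w + 1)"
    using greedy_class_matching[OF fM buckets few_bad] by blast
  have "good_pair \<beta> (card V) E Y (fst p) (snd p)" if "p \<in> set ps" for p
  proof -
    have "\<bar>real (deg E Y (fst p)) - real (deg E Y (snd p))\<bar> < real w"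
      using ps(2) that w(1) unfolding R_def by (intro abs_diff_lt_of_div_eq) auto
    then show ?thesis using ps(2) that w(2) unfolding good_pair_def R_def M_def sd_def by auto
  qed
  then show ?thesis using ps unfolding M_def by auto
qed

section \<open>Choice of the parameters\<close>

lemma block_size_inequalities:
  fixes n h y k a \<kappa> \<gamma> :: real
  assumes \<kappa>: "0 < \<kappa>" "\<kappa> \<le> 1 / 1000" and \<gamma>: "\<gamma> = \<kappa>^2 / 10000" and n: "n \<ge> 10000"
    and h: "n / 2 - 1 / 2 \<le> h" "h \<le> n / 2" "y = n - h"
    and k: "\<kappa> * n \<le> k" "k \<le> \<kappa> * n + 1"
    and a: "y / 20 - 1 \<le> a" "a \<le> y / 20"
  shows "k > 0" "k + a \<le> h" "2 * k \<le> h" "2 * k \<le> 0.5 * y"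
    "a > 2 * k + 2 * (0.02 * y) + 4 * \<gamma> * n^2 / k" "0.2 * k^2 > 4 * \<gamma> * n^2"
proof -
  have kn: "0 < \<kappa> * n" "\<kappa> * n \<le> n / 1000" using \<kappa> n by (auto simp: mult_right_mono)
  then show k0: "k > 0" using k by linarith
  show "k + a \<le> h" "2 * k \<le> h" "2 * k \<le> 0.5 * y" using k kn a h n by linarith+
  have "\<gamma> \<ge> 0" unfolding \<gamma> by simp
  then have "4 * \<gamma> * n^2 / k \<le> 4 * \<gamma> * n^2 / (\<kappa> * n)"
    using k kn k0 by (intro divide_left_mono) auto
  also have "\<dots> = (4 / 10000) * (\<kappa> * n)"
    unfolding \<gamma> using \<kappa> n by (simp add: power2_eq_square field_simps)
  moreover have "2 * (0.02 * y) = y / 25" by simp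
  ultimately show "a > 2 * k + 2 * (0.02 * y) + 4 * \<gamma> * n^2 / k" using k kn a h n by linarith
  have "(\<kappa> * n)^2 \<le> k^2" using k kn by (intro power_mono) auto
  moreover have "4 * \<gamma> * n^2 = 4 / 10000 * (\<kappa> * n)^2" unfolding \<gamma> by (simp add: power_mult_distrib)
  moreover have "0 < (\<kappa> * n)^2" by (rule zero_less_power[OF kn(1)])
  ultimately show "0.2 * k^2 > 4 * \<gamma> * n^2" by linarith
qed

lemma pair_count_inequality:
  fixes n h y k w J m \<beta> \<kappa> \<gamma> :: real
  assumes \<beta>: "\<beta> > 0" and \<kappa>: "0 \<le> \<kappa>" "\<kappa> \<le> \<beta> / 1000" "\<kappa> \<le> 1 / 1000" and \<gamma>: "\<gamma> = \<kappa>^2 / 10000"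
    and n: "n \<ge> 10000" "\<beta> * n \<ge> 10000"
    and h: "n / 2 - 1 / 2 \<le> h" "h \<le> n / 2" "y = n - h"
    and k: "0 < k" "k \<le> \<kappa> * n + 1"
    and w: "\<beta> * n - 1 \<le> w" "w \<le> \<beta> * n"
    and J: "J * w \<le> y + w" and m: "m \<le> n / 20 + 1"
  shows "2 * m + 2 * k * J + 2 * k + (h * y / 2 + \<gamma> * n^2) / (0.9 * y) \<le> h"
proof -
  have npos: "n > 0" and y: "n / 2 \<le> y" "y \<le> n / 2 + 1 / 2" using n h by auto
  have wpos: "w \<ge> \<beta> * n / 2" "w > 0" using w n by linarith+
  \<comment> \<open>The number J of degree buckets is about 1/\<beta>, so k J is a small multiple of n.\<close>
  have "k * J * w \<le> k * (y + w)" using J k by (simp add: mult.assoc)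
  then have "k * J \<le> k * y / w + k" using wpos by (simp add: field_simps)
  also have "\<dots> \<le> k * y / (\<beta> * n / 2) + k"
    using wpos k y npos \<beta> by (intro add_right_mono divide_left_mono) auto
  also have "\<dots> = 2 * (k / \<beta>) * (y / n) + k" using npos \<beta> by (simp add: field_simps)
  also have "\<dots> \<le> 2 * (k / \<beta>) + k"
    using y npos k \<beta> n by (simp add: field_simps)
  also have "\<dots> \<le> 2 * (\<kappa> / \<beta> * n + 1 / \<beta>) + k"
    using divide_right_mono[OF k(2), of \<beta>] \<beta> by (simp add: add_divide_distrib)
  also have "\<dots> \<le> n / 400 + k"
  proof -
    have "\<kappa> / \<beta> \<le> 1 / 1000" using \<beta> \<kappa> by (simp add: field_simps)
    then have "\<kappa> / \<beta> * n \<le> 1 / 1000 * n" using npos by (intro mult_right_mono) auto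
    moreover have "1 / \<beta> \<le> n / 10000" using n \<beta> by (simp add: field_simps)
    ultimately show ?thesis unfolding distrib_left using npos by linarith
  qed
  finally have kJ: "k * J \<le> n / 400 + k" .
  have "\<kappa>^2 \<le> (1 / 1000)^2" using \<kappa>(3,1) by (rule power_mono)
  then have "\<kappa>^2 \<le> 1 / 1000000" by (simp add: power_divide)
  then have "\<gamma> \<le> 1 / 10000000000" "\<gamma> \<ge> 0" unfolding \<gamma> by simp_all
  moreover have "n^2 / y \<le> 2 * n" "n^2 / y \<ge> 0" using y npos by (simp_all add: field_simps power2_eq_square)
  ultimately have "\<gamma> * (n^2 / y) \<le> 1 / 10000000000 * (2 * n)" by (intro mult_mono) auto
  then have G: "\<gamma> * (n^2 / y) \<le> n / 1000000" using npos by linarith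
  \<comment> \<open>linarith fails on these quotients unless they are named.\<close>
  define B where "B = (h * y / 2 + \<gamma> * n^2) / (0.9 * y)"
  define D where "D = \<gamma> * (n^2 / y)"
  have "B = h * (5 / 9) + D * (10 / 9)" unfolding B_def D_def using y npos by (simp add: field_simps)
  moreover have "\<kappa> * n \<le> n / 1000" using \<kappa> npos by (simp add: field_simps)
  moreover have "2 * k * J = 2 * (k * J)" by simp
  ultimately show ?thesis unfolding B_def[symmetric] using G[folded D_def] kJ k m h n by linarith
qed

lemma host_good_if_half_cuts_uniform:
  assumes G: "is_graph V E" and \<beta>: "\<beta> > 0"
    and cut: "half_cuts_uniform ((min \<beta> 1 / 1000)^2 / 10000) V E"
    and n: "10000 \<le> card V" "10000 \<le> \<beta> * card V"
  shows "host_good \<beta> V E"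
proof -
  define \<kappa> where "\<kappa> = min \<beta> 1 / 1000"
  define \<gamma> where "\<gamma> = \<kappa>^2 / 10000"
  have cut: "half_cuts_uniform \<gamma> V E" using cut unfolding \<gamma>_def \<kappa>_def .
  have \<kappa>: "0 < \<kappa>" "\<kappa> \<le> \<beta> / 1000" "\<kappa> \<le> 1 / 1000" unfolding \<kappa>_def using \<beta> by auto
  have fV: "finite V" using G unfolding is_graph_def by auto
  obtain X where X: "X \<subseteq> V" "card X = card V div 2"
    using obtain_subset_with_card_n[of "card V div 2" V] by auto
  define Y where "Y = V - X"
  have cY: "card Y = card V - card V div 2" unfolding Y_def using X fV by (simp add: card_Diff_subset finite_subset)
  then have Ypos: "card Y > 0" using n by linarith
  define k where "k = nat \<lceil>\<kappa> * card V\<rceil>"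
  define a where "a = card Y div 20"
  define w where "w = nat \<lfloor>\<beta> * card V\<rfloor>"
  define J where "J = card Y div w + 1"
  define m where "m = nat \<lceil>real (card V) / 20\<rceil>"
  have h: "real (card V) / 2 - 1 / 2 \<le> real (card V div 2)" "real (card V div 2) \<le> real (card V) / 2"
    "real (card Y) = real (card V) - real (card V div 2)" using cY by linarith+
  have "real k = of_int \<lceil>\<kappa> * card V\<rceil>" unfolding k_def using \<kappa> by simp
  then have rk: "\<kappa> * card V \<le> real k" "real k \<le> \<kappa> * card V + 1"
    using ceiling_correct[of "\<kappa> * card V"] by linarith+
  have ra: "real (card Y) / 20 - 1 \<le> real a" "real a \<le> real (card Y) / 20"
    unfolding a_def by linarith+
  have "real w = of_int \<lfloor>\<beta> * card V\<rfloor>" unfolding w_def using \<beta> by simp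
  then have rw: "\<beta> * card V - 1 \<le> real w" "real w \<le> \<beta> * card V"
    using floor_correct[of "\<beta> * card V"] by linarith+
  have "(card Y div w) * w \<le> card Y" by (simp add: div_times_less_eq_dividend)
  then have rJ: "real J * real w \<le> real (card Y) + real w" unfolding J_def
    by (metis add.commute distrib_right mult_1 add_le_mono1 of_nat_le_iff of_nat_mult of_nat_add)
  have rm: "real m \<le> real (card V) / 20 + 1" unfolding m_def by linarith
  have nr: "10000 \<le> real (card V)" using n(1) by simp
  note sizes = block_size_inequalities[OF \<kappa>(1,3) \<gamma>_def nr h rk ra]
  have k: "k > 0" "k + a \<le> card V div 2" "2 * k \<le> card V div 2" "real (2 * k) \<le> 0.5 * card Y"
    using sizes(1-4) by (simp, metis of_nat_add of_nat_le_iff, linarith, simp)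
  have w0: "w > 0" using rw(1) n(2) by linarith
  define M where "M = {x\<in>X. 0.1 * card Y \<le> real (deg E Y x) \<and> real (deg E Y x) \<le> 0.9 * card Y}"
  define B where "B = (real (card X) * card Y / 2 + \<gamma> * real (card V) ^ 2) / (0.9 * card Y)"
  have "real (card X) \<le> card M + 2 * real k + B"
    using card_medium_degree_ge[OF G cut X Y_def Ypos k(1,3,4) sizes(6)] unfolding M_def B_def by simp
  moreover obtain ps where ps: "distinct (map fst ps @ map snd ps)"
    "\<forall>p\<in>set ps. fst p \<in> X \<and> snd p \<in> X \<and> good_pair \<beta> (card V) E Y (fst p) (snd p)"
    "card M \<le> 2 * length ps + 2 * k * J"
    using many_good_pairs[OF G cut X(1) Y_def Ypos k(1,2) sizes(5) _ _ w0 rw(2)]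
    unfolding M_def J_def a_def \<gamma>_def by auto
  moreover have "2 * real m + 2 * real k * real J + 2 * real k + B \<le> real (card X)"
    using pair_count_inequality[OF \<beta> less_imp_le[OF \<kappa>(1)] \<kappa>(2,3) \<gamma>_def nr n(2) h sizes(1) rk(2) rw rJ rm]
      X unfolding B_def by simp
  moreover have "real (card M) \<le> 2 * real (length ps) + 2 * real k * real J"
    using of_nat_mono[OF ps(3)] by simp
  ultimately have "m \<le> length ps" by linarith
  then show ?thesis
    using host_good_of_good_pairs[OF _ _ _ _ ps(1,2)] X Y_def m_def by auto
qed

theorem lemma2p13:
  fixes \<beta> :: real
  assumes "\<beta> > 0"
  shows "\<exists>\<gamma>::real. \<gamma> > 0 \<and> (\<exists>n0::nat. \<forall>(V::nat set) E.
           is_graph V E \<longrightarrow> card V \<ge> n0 \<longrightarrow>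
           (\<forall>X Y. X \<union> Y = V \<longrightarrow> X \<inter> Y = {} \<longrightarrow> card X = card V div 2 \<longrightarrow>
              \<bar>real (e_between E X Y) - real (card X) * real (card Y) / 2\<bar> \<le> \<gamma> * real (card V) ^ 2)
           \<longrightarrow> host_good \<beta> V E)"
proof -
  define \<gamma> where "\<gamma> = (min \<beta> 1 / 1000)^2 / 10000"
  define n0 where "n0 = nat \<lceil>10000 / \<beta>\<rceil> + 10000"
  have "host_good \<beta> V E" if G: "is_graph V E" and n: "n0 \<le> card V"
    and cut: "\<forall>X Y. X \<union> Y = V \<longrightarrow> X \<inter> Y = {} \<longrightarrow> card X = card V div 2 \<longrightarrow>
       \<bar>real (e_between E X Y) - real (card X) * real (card Y) / 2\<bar> \<le> \<gamma> * real (card V) ^ 2"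
    for V :: "nat set" and E
  proof (rule host_good_if_half_cuts_uniform[OF G assms])
    show "half_cuts_uniform ((min \<beta> 1 / 1000)^2 / 10000) V E"
      using cut unfolding half_cuts_uniform_def \<gamma>_def .
    show "10000 \<le> card V" using n unfolding n0_def by linarith
    have "10000 / \<beta> \<le> real (card V)"
      using real_nat_ceiling_ge[of "10000 / \<beta>"] n unfolding n0_def by linarith
    then show "10000 \<le> \<beta> * card V" using assms by (simp add: field_simps)
  qed
  moreover have "\<gamma> > 0" unfolding \<gamma>_def using assms by simp
  ultimately show ?thesis by blast
qed

end
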